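(* Let $\mathcal F$ be the fermionic Fock space generated from a unit vector $\Omega_0$ (the non-interacting vacuum) by operators $b_n, c_n$ ($n\in\mathbb Z$) satisfying the canonical anticommutation relations $\{b_n,b_{n'}^\dagger\}=\{c_n,c_{n'}^\dagger\}=\delta_{nn'}$ (all other anticommutators among $b_n,b_n^\dagger,c_n,c_n^\dagger$ vanishing) and $b_n\Omega_0=c_n\Omega_0=0$ for all $n$. Let $\mathcal H_0\subset\mathcal F$ be the zero-charge subspace (defined in the context). For $P\in\mathbb Z$ let $\Omega_P$ be the unexcited states: $\Omega_0$ is the vacuum, and $$\Omega_P=\prod_{i=0}^{P-1}\bigl(b_i^\dagger c_{-i}^\dagger\bigr)\Omega_0\quad (P\ge 1),\qquad \Omega_P=\prod_{i=1}^{-P}\bigl(b_{-i}^\dagger c_{i}^\dagger\bigr)\Omega_0\quad (P\le -1).$$ Then there is a unitary operator $\mathbf\Gamma$ on $\mathcal F$, determined by the relations $$\mathbf\Gamma\Omega_0=b_{-1}^\dagger c_1^\dagger\Omega_0,$$ $$\mathbf\Gamma b_n\mathbf\Gamma^{-1}=b_{n-1},\ \ \mathbf\Gamma c_n\mathbf\Gamma^{-1}=c_{n+1}\ (n\neq0),\qquad \mathbf\Gamma b_0\mathbf\Gamma^{-1}=c_1^\dagger,\ \ \mathbf\Gamma c_0\mathbf\Gamma^{-1}=b_{-1}^\dagger,$$ $$\mathbf\Gamma b_n^\dagger\mathbf\Gamma^{-1}=b_{n-1}^\dagger,\ \ \mathbf\Gamma c_n^\dagger\mathbf\Gamma^{-1}=c_{n+1}^\dagger\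 (n\neq0),\qquad \mathbf\Gamma b_0^\dagger\mathbf\Gamma^{-1}=c_1,\ \ \mathbf\Gamma c_0^\dagger\mathbf\Gamma^{-1}=b_{-1},$$ which maps $\mathcal H_0$ onto itself, so that $N\mapsto\mathbf\Gamma^N|_{\mathcal H_0}$ is a unitary action of the group $\mathbb Z$ on $\mathcal H_0$. Moreover $\mathbf\Gamma\Omega_P=\Omega_{P-1}$ and $\mathbf\Gamma^{-1}\Omega_P=\Omega_{P+1}$ for all $P\in\mathbb Z$ (in particular $\mathbf\Gamma^{-1}\Omega_0=b_0^\dagger c_0^\dagger\Omega_0$), and $\mathbf\Gamma^{-1}$ acts by the inverse relations.
   Context: For finite subsets $\mathbf m=\{m_1<\dots<m_M\}$ and $\mathbf n=\{n_1<\dots<n_N\}$ of $\mathbb Z$, the vectors $\Omega_{\mathbf m,\mathbf n}=b_{m_1}^\dagger\cdots b_{m_M}^\dagger c_{n_1}^\dagger\cdots c_{n_N}^\dagger\Omega_0$ form an orthonormal basis of $\mathcal F$. The zero-charge Fock space $\mathcal H_0$ is the closed linear span of those $\Omega_{\mathbf m,\mathbf n}$ with $|\mathbf m|=|\mathbf n|$ (equal numbers of fermions $b^\dagger$ and antifermions $c^\dagger$). The factors $b_i^\dagger c_{-i}^\dagger$ in the definition of $\Omega_P$ are products of two fermionic operators and hence commute with one another, so the order of the product is immaterial. This large gauge transformation $\mathbf\Gamma$ corresponds to the gauge transformation $x\mapsto e^{2\pi i x/L}$ on the circle of length $L$. *)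

theory Defs
  imports "HOL-Analysis.Analysis"
begin

text \<open>Concrete model of the fermionic Fock space: a vector is given by its
coefficients with respect to the orthonormal basis Omega_{m,n}, indexed by pairs
(m,n) of finite subsets of the integers (m = occupied fermion modes b, n = occupied
antifermion modes c).\<close>

type_synonym fvec = "int set \<times> int set \<Rightarrow> complex"

definition fock_space :: "fvec set" where
  "fock_space = {f. (\<forall>m n. f (m, n) \<noteq> 0 \<longrightarrow> finite m \<and> finite n)
                    \<and> (\<lambda>p. (cmod (f p))^2) summable_on UNIV}"

definition fock_norm :: "fvec \<Rightarrow> real" where
  "fock_norm f = sqrt (infsum (\<lambda>p. (cmod (f p))^2) UNIV)"

definition basis_vec :: "int set \<Rightarrow> int set \<Rightarrow> fvec" where
  "basis_vec m n = (\<lambda>p. if p = (m, n) then 1 else 0)"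

definition vac :: fvec where
  "vac = basis_vec {} {}"

text \<open>Creation / annihilation operators, with the sign convention
Omega_{m,n} = b^dag_{m_1} ... b^dag_{m_M} c^dag_{n_1} ... c^dag_{n_N} Omega_0
(m_1 < ... < m_M, n_1 < ... < n_N).\<close>
definition bdag :: "int \<Rightarrow> fvec \<Rightarrow> fvec" where
  "bdag k f = (\<lambda>(m, n). if k \<in> m then (-1) ^ card {i\<in>m. i < k} * f (m - {k}, n) else 0)"

definition bann :: "int \<Rightarrow> fvec \<Rightarrow> fvec" where
  "bann k f = (\<lambda>(m, n). if k \<notin> m then (-1) ^ card {i\<in>m. i < k} * f (insert k m, n) else 0)"

definition cdag :: "int \<Rightarrow> fvec \<Rightarrow> fvec" where
  "cdag k f = (\<lambda>(m, n). if k \<in> n then (-1) ^ (card m + card {j\<in>n. j < k}) * f (m, n - {k}) else 0)"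

definition cann :: "int \<Rightarrow> fvec \<Rightarrow> fvec" where
  "cann k f = (\<lambda>(m, n). if k \<notin> n then (-1) ^ (card m + card {j\<in>n. j < k}) * f (m, insert k n) else 0)"

definition zero_charge :: "fvec set" where
  "zero_charge = {f \<in> fock_space. \<forall>m n. f (m, n) \<noteq> 0 \<longrightarrow> card m = card n}"

fun omega_pos :: "nat \<Rightarrow> fvec" where
  "omega_pos 0 = vac"
| "omega_pos (Suc k) = bdag (int k) (cdag (- int k) (omega_pos k))"

fun omega_neg :: "nat \<Rightarrow> fvec" where
  "omega_neg 0 = vac"
| "omega_neg (Suc k) = bdag (- int (Suc k)) (cdag (int (Suc k)) (omega_neg k))"

definition Omega :: "int \<Rightarrow> fvec" where
  "Omega P = (if P \<ge> 0 then omega_pos (nat P) else omega_neg (nat (- P)))"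

definition fock_unitary :: "(fvec \<Rightarrow> fvec) \<Rightarrow> bool" where
  "fock_unitary U \<longleftrightarrow>
     U ` fock_space = fock_space
   \<and> (\<forall>f\<in>fock_space. \<forall>g\<in>fock_space. \<forall>a::complex.
        U (\<lambda>p. a * f p + g p) = (\<lambda>p. a * U f p + U g p))
   \<and> (\<forall>f\<in>fock_space. fock_norm (U f) = fock_norm f)"

text \<open>Since Gamma is a bijection of the Fock space and the b, c operators preserve it,
Gamma X Gamma^{-1} = Y is written as Gamma X = Y Gamma on the Fock space.\<close>
definition gamma_relations :: "(fvec \<Rightarrow> fvec) \<Rightarrow> bool" where
  "gamma_relations G \<longleftrightarrow>
     G vac = bdag (-1) (cdag 1 vac)
   \<and> (\<forall>n. \<forall>f\<in>fock_space. n \<noteq> 0 \<longrightarrow>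
        G (bann n f) = bann (n - 1) (G f) \<and> G (cann n f) = cann (n + 1) (G f)
      \<and> G (bdag n f) = bdag (n - 1) (G f) \<and> G (cdag n f) = cdag (n + 1) (G f))
   \<and> (\<forall>f\<in>fock_space.
        G (bann 0 f) = cdag 1 (G f) \<and> G (cann 0 f) = bdag (-1) (G f)
      \<and> G (bdag 0 f) = cann 1 (G f) \<and> G (cdag 0 f) = bann (-1) (G f))"

definition gamma_inv_relations :: "(fvec \<Rightarrow> fvec) \<Rightarrow> bool" where
  "gamma_inv_relations H \<longleftrightarrow>
     H vac = bdag 0 (cdag 0 vac)
   \<and> (\<forall>n. \<forall>f\<in>fock_space. n \<noteq> -1 \<longrightarrow>
        H (bann n f) = bann (n + 1) (H f) \<and> H (bdag n f) = bdag (n + 1) (H f))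
   \<and> (\<forall>n. \<forall>f\<in>fock_space. n \<noteq> 1 \<longrightarrow>
        H (cann n f) = cann (n - 1) (H f) \<and> H (cdag n f) = cdag (n - 1) (H f))
   \<and> (\<forall>f\<in>fock_space.
        H (cdag 1 f) = bann 0 (H f) \<and> H (bdag (-1) f) = cann 0 (H f)
      \<and> H (cann 1 f) = bdag 0 (H f) \<and> H (bann (-1) f) = cdag 0 (H f))"

end

theory Submission
  imports Defs
begin

text \<open>\<open>\<Gamma>\<close> acts on the basis as a signed permutation: it lowers every fermion mode by one
and raises every antifermion mode by one, except that the modes \<open>b\<^sub>0\<close> and \<open>c\<^sub>0\<close> are
particle-hole conjugated into \<open>c\<^sub>1\<close> and \<open>b\<^sub>-\<^sub>1\<close>. With the right sign on each basis vector
this signed permutation satisfies all the relations, and since the relations determine the image of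
every basis vector, polarization of the norm identity shows that any unitary satisfying them is this
one. Each relabelled basis vector \<open>\<Omega>\<^sub>m\<^sub>,\<^sub>n\<close> has \<open>|m| = |n|\<close> iff the original had, and the unexcited
states are simply shifted along the chain \<open>\<Omega>\<^sub>P \<mapsto> \<Omega>\<^sub>P\<^sub>-\<^sub>1\<close>.\<close>

section \<open>Relabelling of the modes\<close>

definition shift_b :: "int set \<Rightarrow> int set \<Rightarrow> int set" where
  "shift_b m n = (if 0 \<in> n then (\<lambda>i. i - 1) ` (m - {0}) else insert (-1) ((\<lambda>i. i - 1) ` (m - {0})))"

definition shift_c :: "int set \<Rightarrow> int set \<Rightarrow> int set" where
  "shift_c m n = (if 0 \<in> m then (\<lambda>j. j + 1) ` (n - {0}) else insert 1 ((\<lambda>j. j + 1) ` (n - {0})))"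

definition unshift_b :: "int set \<Rightarrow> int set \<Rightarrow> int set" where
  "unshift_b m n = (if 1 \<in> n then (\<lambda>i. i + 1) ` (m - {-1}) else insert 0 ((\<lambda>i. i + 1) ` (m - {-1})))"

definition unshift_c :: "int set \<Rightarrow> int set \<Rightarrow> int set" where
  "unshift_c m n = (if -1 \<in> m then (\<lambda>j. j - 1) ` (n - {1}) else insert 0 ((\<lambda>j. j - 1) ` (n - {1})))"

definition shift_modes :: "int set \<times> int set \<Rightarrow> int set \<times> int set" where
  "shift_modes = (\<lambda>(m, n). (shift_b m n, shift_c m n))"

definition unshift_modes :: "int set \<times> int set \<Rightarrow> int set \<times> int set" where
  "unshift_modes = (\<lambda>(m, n). (unshift_b m n, unshift_c m n))"

lemma shift_modes_pair: "shift_modes (m, n) = (shift_b m n, shift_c m n)"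
  by (simp add: shift_modes_def)

lemma unshift_modes_pair: "unshift_modes (m, n) = (unshift_b m n, unshift_c m n)"
  by (simp add: unshift_modes_def)

lemma mem_image_minus_one [simp]: "x \<in> (\<lambda>i::int. i - 1) ` S \<longleftrightarrow> x + 1 \<in> S"
  by (auto simp: image_iff) (metis add_diff_cancel_right')

lemma mem_image_plus_one [simp]: "x \<in> (\<lambda>i::int. i + 1) ` S \<longleftrightarrow> x - 1 \<in> S"
  by (auto simp: image_iff) (metis diff_add_cancel)

lemma shift_b_iff: "x \<in> shift_b m n \<longleftrightarrow> (x \<noteq> -1 \<and> x + 1 \<in> m) \<or> (x = -1 \<and> 0 \<notin> n)"
  unfolding shift_b_def by auto

lemma shift_c_iff: "x \<in> shift_c m n \<longleftrightarrow> (x \<noteq> 1 \<and> x - 1 \<in> n) \<or> (x = 1 \<and> 0 \<notin> m)"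
  unfolding shift_c_def by auto

lemma unshift_b_iff: "x \<in> unshift_b m n \<longleftrightarrow> (x \<noteq> 0 \<and> x - 1 \<in> m) \<or> (x = 0 \<and> 1 \<notin> n)"
  unfolding unshift_b_def by auto

lemma unshift_c_iff: "x \<in> unshift_c m n \<longleftrightarrow> (x \<noteq> 0 \<and> x + 1 \<in> n) \<or> (x = 0 \<and> -1 \<notin> m)"
  unfolding unshift_c_def by auto

lemmas modes_iff = shift_b_iff shift_c_iff unshift_b_iff unshift_c_iff

lemma unshift_shift_modes [simp]: "unshift_modes (shift_modes p) = p"
  by (cases p) (auto simp: shift_modes_pair unshift_modes_pair modes_iff eq_neg_iff_add_eq_0[symmetric])

lemma shift_unshift_modes [simp]: "shift_modes (unshift_modes q) = q"
  by (cases q) (auto simp: shift_modes_pair unshift_modes_pair modes_iff eq_neg_iff_add_eq_0[symmetric])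

lemma bij_shift_modes: "bij shift_modes"
  by (rule o_bij[of unshift_modes]) (simp_all add: fun_eq_iff)

lemma bij_unshift_modes: "bij unshift_modes"
  by (rule o_bij[of shift_modes]) (simp_all add: fun_eq_iff)

lemma eq_on_shift_modes: "(\<And>m n. F (shift_modes (m, n)) = H (shift_modes (m, n))) \<Longrightarrow> F = H"
  by (metis shift_unshift_modes prod.collapse ext)

lemma finite_shift_b [simp]: "finite (shift_b m n) \<longleftrightarrow> finite m"
proof -
  have "finite ((\<lambda>i::int. i - 1) ` (m - {0})) \<longleftrightarrow> finite (m - {0})"
    by (rule finite_image_iff) (simp add: inj_on_def)
  then show ?thesis by (simp add: shift_b_def)
qed

lemma finite_shift_c [simp]: "finite (shift_c m n) \<longleftrightarrow> finite n"
proof -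
  have "finite ((\<lambda>j::int. j + 1) ` (n - {0})) \<longleftrightarrow> finite (n - {0})"
    by (rule finite_image_iff) (simp add: inj_on_def)
  then show ?thesis by (simp add: shift_c_def)
qed

lemma finite_unshift_modes:
  "finite (fst (unshift_modes q)) \<and> finite (snd (unshift_modes q)) \<longleftrightarrow> finite (fst q) \<and> finite (snd q)"
proof -
  obtain m n where p: "unshift_modes q = (m, n)" by force
  then have "q = (shift_b m n, shift_c m n)" by (metis shift_modes_pair shift_unshift_modes)
  then show ?thesis using p by simp
qed

definition count_below :: "int set \<Rightarrow> int \<Rightarrow> nat" where
  "count_below S k = card {i\<in>S. i < k}"

lemma count_below_insert_self [simp]: "count_below (insert k S) k = count_below S k"
  unfolding count_below_def by (rule arg_cong[where f=card]) auto

lemma count_below_remove_self [simp]: "count_below (S - {k}) k = count_below S k"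
  unfolding count_below_def by (rule arg_cong[where f=card]) auto

lemma card_filter_remove_point:
  assumes "finite S"
  shows "card {i\<in>S. P i} = card {i\<in>S. i \<noteq> a \<and> P i} + (if a \<in> S \<and> P a then 1 else 0)"
proof (cases "a \<in> S \<and> P a")
  case True
  then have "{i\<in>S. P i} = insert a {i\<in>S. i \<noteq> a \<and> P i}" by auto
  then show ?thesis using True assms by simp
next
  case False
  then have "{i\<in>S. P i} = {i\<in>S. i \<noteq> a \<and> P i}" by auto
  then show ?thesis using False by simp
qed

lemma card_filter_insert:
  assumes "finite S" "k \<notin> S"
  shows "card {i\<in>insert k S. P i} = card {i\<in>S. P i} + (if P k then 1 else 0)"
proof -
  have "{i\<in>insert k S. i \<noteq> k \<and> P i} = {i\<in>S. P i}" using assms(2) by auto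
  then show ?thesis using card_filter_remove_point[of "insert k S" P k] assms(1) by simp
qed

lemma card_nonzero_split:
  assumes "finite (S :: int set)"
  shows "card {i\<in>S. i \<noteq> 0} = card {i\<in>S. 0 < i} + card {i\<in>S. i < 0}"
proof -
  have "{i\<in>S. i \<noteq> 0} = {i\<in>S. 0 < i} \<union> {i\<in>S. i < 0}" by auto
  then show ?thesis using assms by (simp add: card_Un_disjoint disjoint_iff)
qed

lemma card_filter_shift_b:
  assumes "finite m"
  shows "card {i\<in>shift_b m n. P i} = card {i\<in>m. i \<noteq> 0 \<and> P (i - 1)} + (if 0 \<notin> n \<and> P (-1) then 1 else 0)"
proof -
  let ?S = "(\<lambda>i::int. i - 1) ` (m - {0})"
  have "{i\<in>?S. P i} = (\<lambda>i. i - 1) ` {i\<in>m. i \<noteq> 0 \<and> P (i - 1)}" by auto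
  then have "card {i\<in>?S. P i} = card {i\<in>m. i \<noteq> 0 \<and> P (i - 1)}"
    by (simp add: card_image inj_on_def)
  moreover have "finite ?S" "-1 \<notin> ?S" using assms by auto
  ultimately show ?thesis
    using card_filter_insert[of ?S "-1" P] by (simp add: shift_b_def del: mem_image_minus_one)
qed

lemma card_filter_shift_c:
  assumes "finite n"
  shows "card {j\<in>shift_c m n. P j} = card {j\<in>n. j \<noteq> 0 \<and> P (j + 1)} + (if 0 \<notin> m \<and> P 1 then 1 else 0)"
proof -
  let ?S = "(\<lambda>j::int. j + 1) ` (n - {0})"
  have "{j\<in>?S. P j} = (\<lambda>j. j + 1) ` {j\<in>n. j \<noteq> 0 \<and> P (j + 1)}" by auto
  then have "card {j\<in>?S. P j} = card {j\<in>n. j \<noteq> 0 \<and> P (j + 1)}"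
    by (simp add: card_image inj_on_def)
  moreover have "finite ?S" "1 \<notin> ?S" using assms by auto
  ultimately show ?thesis
    using card_filter_insert[of ?S 1 P] by (simp add: shift_c_def del: mem_image_plus_one)
qed

lemma card_shift_b:
  "finite m \<Longrightarrow> card (shift_b m n) = card {i\<in>m. i \<noteq> 0} + (if 0 \<notin> n then 1 else 0)"
  using card_filter_shift_b[of m n "\<lambda>_. True"] by simp

lemma card_shift_c:
  "finite n \<Longrightarrow> card (shift_c m n) = card {j\<in>n. j \<noteq> 0} + (if 0 \<notin> m then 1 else 0)"
  using card_filter_shift_c[of n m "\<lambda>_. True"] by simp

lemma card_by_zero:
  "finite (S :: int set) \<Longrightarrow> card S = card {i\<in>S. i \<noteq> 0} + (if 0 \<in> S then 1 else 0)"
  using card_filter_remove_point[of S "\<lambda>_. True" 0] by simp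

lemma card_shift_b_eq_shift_c_iff:
  assumes "finite m" "finite n"
  shows "card (shift_b m n) = card (shift_c m n) \<longleftrightarrow> card m = card n"
  using assms by (simp add: card_shift_b card_shift_c card_by_zero[of m] card_by_zero[of n])

section \<open>The sign of the relabelled basis vectors\<close>

text \<open>The sign of \<open>\<Gamma>\<Omega>\<^sub>m\<^sub>,\<^sub>n\<close> relative to the relabelled basis vector: it is acquired when the
images of the creation operators of \<open>\<Omega>\<^sub>m\<^sub>,\<^sub>n\<close> are applied to \<open>\<Gamma>\<Omega>\<^sub>0 = b\<^sup>\<dagger>\<^sub>-\<^sub>1 c\<^sup>\<dagger>\<^sub>1 \<Omega>\<^sub>0\<close>
and the result is brought into standard order.\<close>

definition gauge_sign_exp :: "int set \<times> int set \<Rightarrow> nat" where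
  "gauge_sign_exp = (\<lambda>(m, n).
     (if 0 \<in> n then 0 else card {i\<in>m. 0 < i} + card {j\<in>n. j < 0})
   + (if 0 \<in> m then (if 0 \<in> n then 0 else 1) + card {i\<in>m. 0 < i} + card {j\<in>n. j < 0} else 0))"

definition gauge_sign :: "int set \<times> int set \<Rightarrow> complex" where
  "gauge_sign p = (-1) ^ gauge_sign_exp p"

lemma gauge_sign_cases: "gauge_sign p = 1 \<or> gauge_sign p = -1"
  by (simp add: gauge_sign_def minus_one_power_iff)

lemma gauge_sign_square: "gauge_sign p * gauge_sign p = 1"
  by (simp add: gauge_sign_def power_add[symmetric])

lemma gauge_sign_empty: "gauge_sign ({}, {}) = 1"
  by (simp add: gauge_sign_def gauge_sign_exp_def)

text \<open>Each sum below collects the signs on both sides of one defining relation of \<open>\<Gamma>\<close>, evaluated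
at a basis vector.\<close>

lemma parity_insert_b:
  assumes "finite m" "k \<noteq> 0" "k \<notin> m"
  shows "even (gauge_sign_exp (insert k m, n) + count_below m k
             + count_below (shift_b m n) (k - 1) + gauge_sign_exp (m, n))"
proof -
  have pos: "card {i\<in>insert k m. 0 < i} = card {i\<in>m. 0 < i} + (if 0 < k then 1 else 0)"
    by (rule card_filter_insert[OF assms(1,3)])
  have shifted: "count_below (shift_b m n) (k - 1)
      = card {i\<in>m. i \<noteq> 0 \<and> i < k} + (if 0 \<notin> n \<and> 0 < k then 1 else 0)"
    unfolding count_below_def by (subst card_filter_shift_b[OF assms(1)]) auto
  have below: "count_below m k = card {i\<in>m. i \<noteq> 0 \<and> i < k} + (if 0 \<in> m \<and> 0 < k then 1 else 0)"
    unfolding count_below_def by (rule card_filter_remove_point[OF assms(1)])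
  have zero: "0 \<in> insert k m \<longleftrightarrow> 0 \<in> m" using assms(2) by auto
  show ?thesis unfolding gauge_sign_exp_def prod.case zero pos shifted below
    by (cases "0 \<in> m"; cases "0 \<in> n"; cases "0 < k"; simp; presburger)
qed

lemma parity_insert_c:
  assumes "finite m" "finite n" "k \<noteq> 0" "k \<notin> n"
  shows "even (gauge_sign_exp (m, insert k n) + card m + count_below n k
             + card (shift_b m n) + count_below (shift_c m n) (k + 1) + gauge_sign_exp (m, n))"
proof -
  have neg: "card {j\<in>insert k n. j < 0} = card {j\<in>n. j < 0} + (if k < 0 then 1 else 0)"
    by (rule card_filter_insert[OF assms(2,4)])
  have shifted: "count_below (shift_c m n) (k + 1)
      = card {j\<in>n. j \<noteq> 0 \<and> j < k} + (if 0 \<notin> m \<and> 0 < k then 1 else 0)"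
    unfolding count_below_def
    by (subst card_filter_shift_c[OF assms(2)]) (auto intro!: arg_cong[where f=card])
  have below: "count_below n k = card {j\<in>n. j \<noteq> 0 \<and> j < k} + (if 0 \<in> n \<and> 0 < k then 1 else 0)"
    unfolding count_below_def by (rule card_filter_remove_point[OF assms(2)])
  have zero: "0 \<in> insert k n \<longleftrightarrow> 0 \<in> n" using assms(3) by auto
  show ?thesis using assms(3) card_by_zero[OF assms(1)]
    unfolding gauge_sign_exp_def prod.case zero neg shifted below card_shift_b[OF assms(1)]
    by (cases "0 \<in> m"; cases "0 \<in> n"; cases "0 < k"; simp; presburger)
qed

lemma parity_insert_b0:
  assumes "finite m" "finite n" "0 \<notin> m"
  shows "even (gauge_sign_exp (insert 0 m, n) + count_below m 0
             + card (shift_b m n) + count_below (shift_c m n) 1 + gauge_sign_exp (m, n))"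
proof -
  have shifted: "count_below (shift_c m n) 1 = card {j\<in>n. j < 0}"
    unfolding count_below_def
    by (subst card_filter_shift_c[OF assms(2)]) (auto intro!: arg_cong[where f=card])
  have pos: "card {i\<in>insert 0 m. 0 < i} = card {i\<in>m. 0 < i}"
    by (rule arg_cong[where f=card]) auto
  have below: "count_below m 0 = card {i\<in>m. i < 0}" by (simp add: count_below_def)
  show ?thesis using assms(3) card_nonzero_split[OF assms(1)]
    unfolding gauge_sign_exp_def prod.case shifted pos card_shift_b[OF assms(1)] below
    by (cases "0 \<in> n"; simp; presburger)
qed

lemma parity_insert_c0:
  assumes "finite m" "finite n" "0 \<notin> n"
  shows "even (gauge_sign_exp (m, insert 0 n) + card m + count_below n 0
             + count_below (shift_b m n) (-1) + gauge_sign_exp (m, n))"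
proof -
  have shifted: "count_below (shift_b m n) (-1) = card {i\<in>m. i < 0}"
    unfolding count_below_def
    by (subst card_filter_shift_b[OF assms(1)]) (auto intro!: arg_cong[where f=card])
  have neg: "card {j\<in>insert 0 n. j < 0} = card {j\<in>n. j < 0}"
    by (rule arg_cong[where f=card]) auto
  have below: "count_below n 0 = card {j\<in>n. j < 0}" by (simp add: count_below_def)
  show ?thesis using assms(3) card_by_zero[OF assms(1)] card_nonzero_split[OF assms(1)]
    unfolding gauge_sign_exp_def prod.case shifted neg below
    by (cases "0 \<in> m"; simp; presburger)
qed

lemma fock_space_finite: "f \<in> fock_space \<Longrightarrow> f p \<noteq> 0 \<Longrightarrow> finite (fst p) \<and> finite (snd p)"
  by (cases p) (simp add: fock_space_def)

lemma fock_space_summable: "f \<in> fock_space \<Longrightarrow> (\<lambda>p. (cmod (f p))\<^sup>2) summable_on UNIV"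
  by (simp add: fock_space_def)

lemma fock_spaceI:
  "(\<And>p. f p \<noteq> 0 \<Longrightarrow> finite (fst p) \<and> finite (snd p)) \<Longrightarrow> (\<lambda>p. (cmod (f p))\<^sup>2) summable_on UNIV
    \<Longrightarrow> f \<in> fock_space"
  by (auto simp: fock_space_def)

lemma fock_space_zero: "(\<lambda>p. 0) \<in> fock_space"
  by (simp add: fock_space_def)

lemma fock_space_lincomb:
  assumes f: "f \<in> fock_space" and g: "g \<in> fock_space"
  shows "(\<lambda>p. a * f p + g p) \<in> fock_space"
proof (rule fock_spaceI)
  have "(\<lambda>p. 2 * (cmod a)\<^sup>2 * (cmod (f p))\<^sup>2 + 2 * (cmod (g p))\<^sup>2) summable_on UNIV"
    by (intro summable_on_add summable_on_cmult_right fock_space_summable f g)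
  then show "(\<lambda>p. (cmod (a * f p + g p))\<^sup>2) summable_on UNIV"
  proof (rule summable_on_comparison_test)
    fix p
    have "cmod (a * f p + g p) \<le> cmod a * cmod (f p) + cmod (g p)"
      by (metis norm_mult norm_triangle_ineq)
    then have "(cmod (a * f p + g p))\<^sup>2 \<le> (cmod a * cmod (f p) + cmod (g p))\<^sup>2"
      by (simp add: power_mono)
    also have "\<dots> \<le> 2 * (cmod a * cmod (f p))\<^sup>2 + 2 * (cmod (g p))\<^sup>2"
      using sum_squares_bound[of "cmod a * cmod (f p)" "cmod (g p)"] by (simp add: power2_eq_square algebra_simps)
    finally show "(cmod (a * f p + g p))\<^sup>2 \<le> 2 * (cmod a)\<^sup>2 * (cmod (f p))\<^sup>2 + 2 * (cmod (g p))\<^sup>2"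
      by (simp add: power_mult_distrib)
  qed simp
next
  fix p assume "a * f p + g p \<noteq> 0"
  then have "f p \<noteq> 0 \<or> g p \<noteq> 0" by auto
  then show "finite (fst p) \<and> finite (snd p)" using fock_space_finite f g by blast
qed

lemma basis_vec_fock_space: "finite m \<Longrightarrow> finite n \<Longrightarrow> basis_vec m n \<in> fock_space"
proof (rule fock_spaceI)
  have "(\<lambda>p. (cmod (basis_vec m n p))\<^sup>2) summable_on {(m, n)}" by simp
  then show "(\<lambda>p. (cmod (basis_vec m n p))\<^sup>2) summable_on UNIV"
    by (rule summable_on_cong_neutral[THEN iffD1, rotated -1]) (auto simp: basis_vec_def)
qed (auto simp: basis_vec_def split: if_splits)

lemma vac_fock_space: "vac \<in> fock_space"
  by (simp add: vac_def basis_vec_fock_space)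

lemma fock_unitary_closed: "fock_unitary U \<Longrightarrow> f \<in> fock_space \<Longrightarrow> U f \<in> fock_space"
  unfolding fock_unitary_def by blast

lemma fock_unitary_scale:
  assumes U: "fock_unitary U" and h: "h \<in> fock_space"
  shows "U (\<lambda>p. c * h p) = (\<lambda>p. c * U h p)"
proof -
  have linear: "U (\<lambda>p. a * f p + g p) = (\<lambda>p. a * U f p + U g p)"
    if "f \<in> fock_space" "g \<in> fock_space" for a f g
    using U that unfolding fock_unitary_def by blast
  have "U (\<lambda>p. 0) = (\<lambda>p. 1 * U (\<lambda>p. 0) p + U (\<lambda>p. 0) p)"
    using linear[OF fock_space_zero fock_space_zero, of 1] by simp
  then have "U (\<lambda>p. 0) = (\<lambda>p. 0)" by (simp add: fun_eq_iff)
  then show ?thesis using linear[OF h fock_space_zero, of c] by simp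
qed

definition relabel :: "(int set \<times> int set \<Rightarrow> complex) \<Rightarrow> (int set \<times> int set \<Rightarrow> int set \<times> int set) \<Rightarrow> fvec \<Rightarrow> fvec" where
  "relabel c \<tau> f = (\<lambda>q. c q * f (\<tau> q))"

lemma relabel_fock_space:
  assumes "bij \<tau>" "\<And>q. cmod (c q) = 1"
    and "\<And>q. finite (fst (\<tau> q)) \<and> finite (snd (\<tau> q)) \<Longrightarrow> finite (fst q) \<and> finite (snd q)"
    and "f \<in> fock_space"
  shows "relabel c \<tau> f \<in> fock_space"
proof (rule fock_spaceI)
  have "(\<lambda>q. (cmod (f (\<tau> q)))\<^sup>2) summable_on UNIV"
    using summable_on_reindex_bij_betw[OF assms(1), of "\<lambda>p. (cmod (f p))\<^sup>2"] fock_space_summable[OF assms(4)]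
    by simp
  then show "(\<lambda>q. (cmod (relabel c \<tau> f q))\<^sup>2) summable_on UNIV"
    by (simp add: relabel_def norm_mult assms(2))
next
  fix q assume "relabel c \<tau> f q \<noteq> 0"
  then have "f (\<tau> q) \<noteq> 0" by (simp add: relabel_def)
  then show "finite (fst q) \<and> finite (snd q)" using assms(3) fock_space_finite[OF assms(4)] by blast
qed

lemma relabel_norm:
  assumes "bij \<tau>" "\<And>q. cmod (c q) = 1"
  shows "fock_norm (relabel c \<tau> f) = fock_norm f"
proof -
  have "infsum (\<lambda>q. (cmod (f (\<tau> q)))\<^sup>2) UNIV = infsum (\<lambda>p. (cmod (f p))\<^sup>2) UNIV"
    by (rule infsum_reindex_bij_betw[OF assms(1)])
  then show ?thesis by (simp add: fock_norm_def relabel_def norm_mult assms(2))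
qed

lemma relabel_linear: "relabel c \<tau> (\<lambda>p. a * f p + g p) = (\<lambda>p. a * relabel c \<tau> f p + relabel c \<tau> g p)"
  by (simp add: relabel_def fun_eq_iff algebra_simps)

lemma fock_unitary_relabel:
  assumes \<tau>: "bij \<tau>" and c: "\<And>q. cmod (c q) = 1"
    and fin: "\<And>q. finite (fst (\<tau> q)) \<and> finite (snd (\<tau> q)) \<longleftrightarrow> finite (fst q) \<and> finite (snd q)"
  shows "fock_unitary (relabel c \<tau>)"
proof -
  have into: "relabel c \<tau> f \<in> fock_space" if "f \<in> fock_space" for f
    by (rule relabel_fock_space[OF \<tau> c _ that]) (simp add: fin)
  have onto: "g \<in> relabel c \<tau> ` fock_space" if g: "g \<in> fock_space" for g
  proof
    let ?c' = "\<lambda>p. inverse (c (inv \<tau> p))"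
    have "finite (fst (inv \<tau> q)) \<and> finite (snd (inv \<tau> q)) \<longleftrightarrow> finite (fst q) \<and> finite (snd q)" for q
      using fin[of "inv \<tau> q"] by (simp add: surj_f_inv_f[OF bij_is_surj[OF \<tau>]])
    then show "relabel ?c' (inv \<tau>) g \<in> fock_space"
      by (intro relabel_fock_space[OF bij_imp_bij_inv[OF \<tau>] _ _ g]) (simp_all add: norm_inverse c)
    have "c q \<noteq> 0" for q using c[of q] by auto
    then show "g = relabel c \<tau> (relabel ?c' (inv \<tau>) g)"
      by (simp add: relabel_def fun_eq_iff inv_f_f[OF bij_is_inj[OF \<tau>]])
  qed
  have "relabel c \<tau> ` fock_space = fock_space"
    using into onto by blast
  then show ?thesis
    by (simp add: fock_unitary_def relabel_linear relabel_norm[OF \<tau> c])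
qed

definition gauge_op :: "fvec \<Rightarrow> fvec" where
  "gauge_op = relabel (gauge_sign \<circ> unshift_modes) unshift_modes"

definition gauge_op_inv :: "fvec \<Rightarrow> fvec" where
  "gauge_op_inv = relabel gauge_sign shift_modes"

lemma gauge_op_shift_modes [simp]: "gauge_op f (shift_modes p) = gauge_sign p * f p"
  by (simp add: gauge_op_def relabel_def)

lemma gauge_op_inv_gauge_op [simp]: "gauge_op_inv (gauge_op f) = f"
  by (simp add: gauge_op_inv_def relabel_def mult.assoc[symmetric] gauge_sign_square)

lemma gauge_op_gauge_op_inv [simp]: "gauge_op (gauge_op_inv g) = g"
  by (simp add: gauge_op_def gauge_op_inv_def relabel_def fun_eq_iff mult.assoc[symmetric] gauge_sign_square)

lemma cmod_gauge_sign [simp]: "cmod (gauge_sign p) = 1"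
  by (simp add: gauge_sign_def norm_power)

lemma fock_unitary_gauge_op: "fock_unitary gauge_op"
  unfolding gauge_op_def
  by (rule fock_unitary_relabel[OF bij_unshift_modes]) (simp_all add: finite_unshift_modes)

lemma fock_unitary_gauge_op_inv: "fock_unitary gauge_op_inv"
  unfolding gauge_op_inv_def
proof (rule fock_unitary_relabel[OF bij_shift_modes])
  show "finite (fst (shift_modes q)) \<and> finite (snd (shift_modes q)) \<longleftrightarrow> finite (fst q) \<and> finite (snd q)" for q
    by (cases q) (simp add: shift_modes_pair)
qed simp

lemma inv_into_gauge_op: "g \<in> fock_space \<Longrightarrow> inv_into fock_space gauge_op g = gauge_op_inv g"
  by (metis fock_unitary_closed fock_unitary_gauge_op_inv gauge_op_inv_gauge_op gauge_op_gauge_op_inv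
      inj_on_inverseI inv_into_f_eq)

lemma gauge_op_basis_vec:
  "gauge_op (basis_vec m n) = (\<lambda>q. gauge_sign (m, n) * basis_vec (shift_b m n) (shift_c m n) q)"
proof (rule eq_on_shift_modes)
  fix m' n'
  have "shift_modes (m', n') = (shift_b m n, shift_c m n) \<longleftrightarrow> (m', n') = (m, n)"
    by (metis shift_modes_pair unshift_shift_modes)
  then show "gauge_op (basis_vec m n) (shift_modes (m', n'))
      = gauge_sign (m, n) * basis_vec (shift_b m n) (shift_c m n) (shift_modes (m', n'))"
    by (auto simp: basis_vec_def)
qed

lemma vac_image: "bdag (-1) (cdag 1 vac) = basis_vec {-1} {1}"
proof -
  have no_lower: "{i::int. i = -1 \<and> i < -1} = {}" "{j::int. j = 1 \<and> j < 1} = {}" by auto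
  show ?thesis by (auto simp: fun_eq_iff bdag_def cdag_def vac_def basis_vec_def no_lower)
qed

lemma gauge_op_vac: "gauge_op vac = bdag (-1) (cdag 1 vac)"
proof -
  have "shift_b {} {} = {-1}" "shift_c {} {} = {1}" by (auto simp: shift_b_iff shift_c_iff)
  then show ?thesis unfolding vac_image by (simp add: vac_def gauge_op_basis_vec gauge_sign_empty)
qed

definition mode_op :: "(int set \<Rightarrow> int set \<Rightarrow> bool) \<Rightarrow> (int set \<Rightarrow> int set \<Rightarrow> nat)
    \<Rightarrow> (int set \<Rightarrow> int set \<Rightarrow> int set \<times> int set) \<Rightarrow> fvec \<Rightarrow> fvec" where
  "mode_op D s \<phi> f = (\<lambda>(m, n). if D m n then (-1) ^ s m n * f (\<phi> m n) else 0)"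

lemma bdag_mode_op: "bdag k = mode_op (\<lambda>m n. k \<in> m) (\<lambda>m n. count_below m k) (\<lambda>m n. (m - {k}, n))"
  by (simp add: fun_eq_iff bdag_def mode_op_def count_below_def)

lemma bann_mode_op: "bann k = mode_op (\<lambda>m n. k \<notin> m) (\<lambda>m n. count_below m k) (\<lambda>m n. (insert k m, n))"
  by (simp add: fun_eq_iff bann_def mode_op_def count_below_def)

lemma cdag_mode_op:
  "cdag k = mode_op (\<lambda>m n. k \<in> n) (\<lambda>m n. card m + count_below n k) (\<lambda>m n. (m, n - {k}))"
  by (simp add: fun_eq_iff cdag_def mode_op_def count_below_def)

lemma cann_mode_op:
  "cann k = mode_op (\<lambda>m n. k \<notin> n) (\<lambda>m n. card m + count_below n k) (\<lambda>m n. (m, insert k n))"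
  by (simp add: fun_eq_iff cann_def mode_op_def count_below_def)

lemma mode_op_fock_space:
  assumes f: "f \<in> fock_space"
    and inj: "\<And>m n m' n'. D m n \<Longrightarrow> D m' n' \<Longrightarrow> \<phi> m n = \<phi> m' n' \<Longrightarrow> m = m' \<and> n = n'"
    and fin: "\<And>m n. D m n \<Longrightarrow> finite (fst (\<phi> m n)) \<Longrightarrow> finite (snd (\<phi> m n)) \<Longrightarrow> finite m \<and> finite n"
  shows "mode_op D s \<phi> f \<in> fock_space"
proof (rule fock_spaceI)
  let ?C = "{(m, n). D m n}"
  have inj_on: "inj_on (case_prod \<phi>) ?C" using inj by (auto simp: inj_on_def)
  have "(\<lambda>p. (cmod (f p))\<^sup>2) summable_on (case_prod \<phi> ` ?C)"
    by (rule summable_on_subset[OF fock_space_summable[OF f]]) simp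
  then have "(\<lambda>p. (cmod (f (case_prod \<phi> p)))\<^sup>2) summable_on ?C"
    by (simp add: summable_on_reindex[OF inj_on] o_def)
  then have "(\<lambda>p. (cmod (mode_op D s \<phi> f p))\<^sup>2) summable_on ?C"
    by (rule summable_on_cong[THEN iffD1, rotated]) (auto simp: mode_op_def norm_mult norm_power)
  then show "(\<lambda>p. (cmod (mode_op D s \<phi> f p))\<^sup>2) summable_on UNIV"
    by (rule summable_on_cong_neutral[THEN iffD1, rotated -1]) (auto simp: mode_op_def)
next
  fix p assume "mode_op D s \<phi> f p \<noteq> 0"
  then show "finite (fst p) \<and> finite (snd p)"
    using fin fock_space_finite[OF f] by (cases p) (auto simp: mode_op_def split: if_splits)
qed

lemma bdag_fock_space: "f \<in> fock_space \<Longrightarrow> bdag k f \<in> fock_space"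
  unfolding bdag_mode_op by (rule mode_op_fock_space) auto

lemma bann_fock_space: "f \<in> fock_space \<Longrightarrow> bann k f \<in> fock_space"
  unfolding bann_mode_op by (rule mode_op_fock_space) auto

lemma cdag_fock_space: "f \<in> fock_space \<Longrightarrow> cdag k f \<in> fock_space"
  unfolding cdag_mode_op by (rule mode_op_fock_space) auto

lemma cann_fock_space: "f \<in> fock_space \<Longrightarrow> cann k f \<in> fock_space"
  unfolding cann_mode_op by (rule mode_op_fock_space) auto

lemma neg_one_power_eq_if_even_add: "even (a + b) \<Longrightarrow> (-1 :: 'a :: ring_1) ^ a = (-1) ^ b"
  by (simp add: minus_one_power_iff)

lemma gauge_op_mode_op:
  assumes f: "f \<in> fock_space"
    and domain: "\<And>m n. D' (shift_b m n) (shift_c m n) \<longleftrightarrow> D m n"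
    and target: "\<And>m n. D m n \<Longrightarrow> \<phi>' (shift_b m n) (shift_c m n) = shift_modes (\<phi> m n)"
    and parity: "\<And>m n. D m n \<Longrightarrow> finite (fst (\<phi> m n)) \<Longrightarrow> finite (snd (\<phi> m n)) \<Longrightarrow>
      even (gauge_sign_exp (m, n) + s m n + s' (shift_b m n) (shift_c m n) + gauge_sign_exp (\<phi> m n))"
  shows "gauge_op (mode_op D s \<phi> f) = mode_op D' s' \<phi>' (gauge_op f)"
proof (rule eq_on_shift_modes)
  fix m n
  have lhs: "gauge_op (mode_op D s \<phi> f) (shift_modes (m, n))
      = (if D m n then gauge_sign (m, n) * ((-1) ^ s m n * f (\<phi> m n)) else 0)"
    by (simp add: mode_op_def)
  have rhs: "mode_op D' s' \<phi>' (gauge_op f) (shift_modes (m, n))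
      = (if D m n then (-1) ^ s' (shift_b m n) (shift_c m n) * (gauge_sign (\<phi> m n) * f (\<phi> m n)) else 0)"
    by (simp add: mode_op_def shift_modes_pair domain target)
  show "gauge_op (mode_op D s \<phi> f) (shift_modes (m, n)) = mode_op D' s' \<phi>' (gauge_op f) (shift_modes (m, n))"
  proof (cases "D m n \<and> f (\<phi> m n) \<noteq> 0")
    case True
    then have "even (gauge_sign_exp (m, n) + s m n + (s' (shift_b m n) (shift_c m n) + gauge_sign_exp (\<phi> m n)))"
      using parity fock_space_finite[OF f] by (simp add: add.assoc)
    then have "(-1::complex) ^ (gauge_sign_exp (m, n) + s m n)
        = (-1) ^ (s' (shift_b m n) (shift_c m n) + gauge_sign_exp (\<phi> m n))"
      by (rule neg_one_power_eq_if_even_add)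
    then show ?thesis unfolding lhs rhs gauge_sign_def
      by (simp add: power_add mult.assoc[symmetric])
  next
    case False
    then show ?thesis unfolding lhs rhs by auto
  qed
qed

lemma gauge_op_bdag:
  assumes "f \<in> fock_space" "k \<noteq> 0"
  shows "gauge_op (bdag k f) = bdag (k - 1) (gauge_op f)"
  unfolding bdag_mode_op
proof (rule gauge_op_mode_op[OF assms(1)], goal_cases)
  case (3 m n)
  have "shift_b (m - {k}) n = shift_b m n - {k - 1}" using assms(2) by (auto simp: shift_b_iff)
  then show ?case using 3 assms(2) parity_insert_b[of "m - {k}" k n] by (simp add: insert_absorb)
qed (use assms(2) in \<open>auto simp: shift_modes_pair shift_b_iff shift_c_iff\<close>)

lemma gauge_op_bann:
  assumes "f \<in> fock_space" "k \<noteq> 0"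
  shows "gauge_op (bann k f) = bann (k - 1) (gauge_op f)"
  unfolding bann_mode_op
proof (rule gauge_op_mode_op[OF assms(1)], goal_cases)
  case (3 m n)
  then show ?case using assms(2) parity_insert_b[of m k n] by (simp add: ac_simps)
qed (use assms(2) in \<open>auto simp: shift_modes_pair shift_b_iff shift_c_iff\<close>)

lemma gauge_op_cdag:
  assumes "f \<in> fock_space" "k \<noteq> 0"
  shows "gauge_op (cdag k f) = cdag (k + 1) (gauge_op f)"
  unfolding cdag_mode_op
proof (rule gauge_op_mode_op[OF assms(1)], goal_cases)
  case (3 m n)
  have "shift_b m (n - {k}) = shift_b m n" "shift_c m (n - {k}) = shift_c m n - {k + 1}"
    using assms(2) by (auto simp: shift_b_iff shift_c_iff)
  then show ?case using 3 assms(2) parity_insert_c[of m "n - {k}" k] by (simp add: insert_absorb ac_simps)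
qed (use assms(2) in \<open>auto simp: shift_modes_pair shift_b_iff shift_c_iff\<close>)

lemma gauge_op_cann:
  assumes "f \<in> fock_space" "k \<noteq> 0"
  shows "gauge_op (cann k f) = cann (k + 1) (gauge_op f)"
  unfolding cann_mode_op
proof (rule gauge_op_mode_op[OF assms(1)], goal_cases)
  case (3 m n)
  then show ?case using assms(2) parity_insert_c[of m n k] by (simp add: ac_simps)
qed (use assms(2) in \<open>auto simp: shift_modes_pair shift_b_iff shift_c_iff\<close>)

lemma gauge_op_bdag0:
  assumes "f \<in> fock_space"
  shows "gauge_op (bdag 0 f) = cann 1 (gauge_op f)"
  unfolding bdag_mode_op cann_mode_op
proof (rule gauge_op_mode_op[OF assms(1)], goal_cases)
  case (3 m n)
  have "shift_b (m - {0}) n = shift_b m n" "shift_c (m - {0}) n = insert 1 (shift_c m n)"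
    by (auto simp: shift_b_iff shift_c_iff)
  then show ?case using 3 parity_insert_b0[of "m - {0}" n] by (simp add: insert_absorb ac_simps)
qed (auto simp: shift_modes_pair shift_b_iff shift_c_iff)

lemma gauge_op_bann0:
  assumes "f \<in> fock_space"
  shows "gauge_op (bann 0 f) = cdag 1 (gauge_op f)"
  unfolding bann_mode_op cdag_mode_op
proof (rule gauge_op_mode_op[OF assms(1)], goal_cases)
  case (3 m n)
  then show ?case using parity_insert_b0[of m n] by (simp add: ac_simps)
qed (auto simp: shift_modes_pair shift_b_iff shift_c_iff)

lemma gauge_op_cdag0:
  assumes "f \<in> fock_space"
  shows "gauge_op (cdag 0 f) = bann (-1) (gauge_op f)"
  unfolding cdag_mode_op bann_mode_op
proof (rule gauge_op_mode_op[OF assms(1)], goal_cases)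
  case (3 m n)
  have "shift_b m (n - {0}) = insert (-1) (shift_b m n)" "shift_c m (n - {0}) = shift_c m n"
    by (auto simp: shift_b_iff shift_c_iff)
  then show ?case using 3 parity_insert_c0[of m "n - {0}"] by (simp add: insert_absorb ac_simps)
qed (auto simp: shift_modes_pair shift_b_iff shift_c_iff)

lemma gauge_op_cann0:
  assumes "f \<in> fock_space"
  shows "gauge_op (cann 0 f) = bdag (-1) (gauge_op f)"
  unfolding cann_mode_op bdag_mode_op
proof (rule gauge_op_mode_op[OF assms(1)], goal_cases)
  case (3 m n)
  then show ?case using parity_insert_c0[of m n] by (simp add: ac_simps)
qed (auto simp: shift_modes_pair shift_b_iff shift_c_iff)

lemma gamma_relations_gauge_op: "gamma_relations gauge_op"
  unfolding gamma_relations_def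
  by (simp add: gauge_op_vac gauge_op_bdag gauge_op_bann gauge_op_cdag gauge_op_cann
      gauge_op_bdag0 gauge_op_bann0 gauge_op_cdag0 gauge_op_cann0)

section \<open>Uniqueness\<close>

lemma gamma_relations_bdag:
  "gamma_relations U \<Longrightarrow> h \<in> fock_space \<Longrightarrow>
    U (bdag k h) = (if k = 0 then cann 1 (U h) else bdag (k - 1) (U h))"
  unfolding gamma_relations_def by auto

lemma gamma_relations_cdag:
  "gamma_relations U \<Longrightarrow> h \<in> fock_space \<Longrightarrow>
    U (cdag k h) = (if k = 0 then bann (-1) (U h) else cdag (k + 1) (U h))"
  unfolding gamma_relations_def by auto

lemma basis_vec_insert_b:
  assumes "k \<notin> m"
  shows "basis_vec (insert k m) n = (\<lambda>p. (-1) ^ count_below m k * bdag k (basis_vec m n) p)"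
proof -
  have "(k \<in> M \<and> M - {k} = m) \<longleftrightarrow> M = insert k m" for M using assms by auto
  moreover have "(-1::complex) ^ count_below m k * (-1) ^ count_below m k = 1"
    by (simp add: power_add[symmetric])
  ultimately show ?thesis by (auto simp: fun_eq_iff bdag_mode_op mode_op_def basis_vec_def)
qed

lemma basis_vec_insert_c:
  assumes "k \<notin> n"
  shows "basis_vec {} (insert k n) = (\<lambda>p. (-1) ^ count_below n k * cdag k (basis_vec {} n) p)"
proof -
  have "(k \<in> N \<and> N - {k} = n) \<longleftrightarrow> N = insert k n" for N using assms by auto
  moreover have "(-1::complex) ^ count_below n k * (-1) ^ count_below n k = 1"
    by (simp add: power_add[symmetric])
  ultimately show ?thesis by (auto simp: fun_eq_iff cdag_mode_op mode_op_def basis_vec_def)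
qed

lemma gamma_relations_agree_on_basis_vec:
  assumes U: "fock_unitary U" "gamma_relations U" and V: "fock_unitary V" "gamma_relations V"
    and "finite m" "finite n"
  shows "U (basis_vec m n) = V (basis_vec m n)"
  using \<open>finite m\<close>
proof (induction m rule: finite_induct)
  case empty
  show ?case using \<open>finite n\<close>
  proof (induction n rule: finite_induct)
    case empty
    then show ?case using U(2) V(2) by (simp add: gamma_relations_def vac_def[symmetric])
  next
    case (insert k n)
    have h: "basis_vec {} n \<in> fock_space" by (simp add: basis_vec_fock_space insert)
    show ?case
      unfolding basis_vec_insert_c[OF insert(2)]
      by (simp add: fock_unitary_scale[OF U(1) cdag_fock_space[OF h]]
          fock_unitary_scale[OF V(1) cdag_fock_space[OF h]]
          gamma_relations_cdag[OF U(2) h] gamma_relations_cdag[OF V(2) h] insert(3))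
  qed
next
  case (insert k m)
  have h: "basis_vec m n \<in> fock_space" by (simp add: basis_vec_fock_space insert \<open>finite n\<close>)
  show ?case
    unfolding basis_vec_insert_b[OF insert(2)]
    by (simp add: fock_unitary_scale[OF U(1) bdag_fock_space[OF h]]
        fock_unitary_scale[OF V(1) bdag_fock_space[OF h]]
        gamma_relations_bdag[OF U(2) h] gamma_relations_bdag[OF V(2) h] insert(3))
qed

lemma infsum_norm_add_basis_vec:
  fixes h :: fvec
  assumes "(\<lambda>p. (cmod (h p))\<^sup>2) summable_on UNIV"
  shows "infsum (\<lambda>p. (cmod (c * basis_vec a b p + h p))\<^sup>2) UNIV
       = infsum (\<lambda>p. (cmod (h p))\<^sup>2) UNIV + ((cmod (c + h (a, b)))\<^sup>2 - (cmod (h (a, b)))\<^sup>2)"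
proof -
  define D where "D = (cmod (c + h (a, b)))\<^sup>2 - (cmod (h (a, b)))\<^sup>2"
  have split: "(\<lambda>p. (cmod (c * basis_vec a b p + h p))\<^sup>2)
      = (\<lambda>p. (cmod (h p))\<^sup>2 + (if p = (a, b) then D else 0))"
    by (auto simp: fun_eq_iff basis_vec_def D_def)
  have "(\<lambda>p. if p = (a, b) then D else 0) summable_on UNIV"
    by (rule summable_on_cong_neutral[where S="{(a, b)}", THEN iffD1]) auto
  moreover have "infsum (\<lambda>p. if p = (a, b) then D else 0) UNIV = infsum (\<lambda>p. D) {(a, b)}"
    by (rule infsum_cong_neutral) auto
  ultimately show ?thesis unfolding split D_def by (simp add: infsum_add[OF assms])
qed

text \<open>Polarization: \<open>|c + y|\<^sup>2 - |y|\<^sup>2\<close> for \<open>c = 1, \<i>\<close> recovers the real and imaginary parts of \<open>y\<close>.\<close>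

lemma complex_eq_by_polarization:
  fixes x y \<epsilon> :: complex
  assumes norms: "\<And>c. (cmod (c * \<epsilon> + x))\<^sup>2 - (cmod x)\<^sup>2 = (cmod (c + y))\<^sup>2 - (cmod y)\<^sup>2"
    and \<epsilon>: "\<epsilon> = 1 \<or> \<epsilon> = -1"
  shows "x = \<epsilon> * y"
proof -
  have re: "(cmod (\<epsilon> + x))\<^sup>2 - (cmod x)\<^sup>2 = (cmod (1 + y))\<^sup>2 - (cmod y)\<^sup>2"
    using norms[of 1] by simp
  have im: "(cmod (\<i> * \<epsilon> + x))\<^sup>2 - (cmod x)\<^sup>2 = (cmod (\<i> + y))\<^sup>2 - (cmod y)\<^sup>2"
    using norms[of "\<i>"] by simp
  from \<epsilon> show ?thesis
  proof
    assume e: "\<epsilon> = 1"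
    have "Re x = Re y" "Im x = Im y"
      using re im unfolding e cmod_power2 by (simp_all add: power2_eq_square algebra_simps)
    then show ?thesis using e by (simp add: complex_eqI)
  next
    assume e: "\<epsilon> = -1"
    have "Re x = - Re y" "Im x = - Im y"
      using re im unfolding e cmod_power2 by (simp_all add: power2_eq_square algebra_simps)
    then show ?thesis using e by (simp add: complex_eqI)
  qed
qed

lemma fock_unitary_coeff:
  assumes U: "fock_unitary U" and f: "f \<in> fock_space" and fr: "finite (fst r)" "finite (snd r)"
    and Ub: "U (basis_vec (fst r) (snd r)) = (\<lambda>p. \<epsilon> * basis_vec (fst q) (snd q) p)"
    and \<epsilon>: "\<epsilon> = 1 \<or> \<epsilon> = -1"
  shows "U f q = \<epsilon> * f r"
proof (rule complex_eq_by_polarization[OF _ \<epsilon>])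
  fix c
  let ?g = "\<lambda>p. c * basis_vec (fst r) (snd r) p + f p"
  have bf: "basis_vec (fst r) (snd r) \<in> fock_space" using basis_vec_fock_space fr by blast
  have norm: "infsum (\<lambda>p. (cmod (U f p))\<^sup>2) UNIV = infsum (\<lambda>p. (cmod (f p))\<^sup>2) UNIV"
    using U f unfolding fock_unitary_def fock_norm_def by simp
  have "U ?g = (\<lambda>p. (c * \<epsilon>) * basis_vec (fst q) (snd q) p + U f p)"
    using U bf f Ub unfolding fock_unitary_def by (simp add: mult.assoc)
  moreover have "fock_norm (U ?g) = fock_norm ?g"
    using U fock_space_lincomb[OF bf f] unfolding fock_unitary_def by blast
  ultimately have "infsum (\<lambda>p. (cmod ((c * \<epsilon>) * basis_vec (fst q) (snd q) p + U f p))\<^sup>2) UNIV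
     = infsum (\<lambda>p. (cmod (c * basis_vec (fst r) (snd r) p + f p))\<^sup>2) UNIV"
    unfolding fock_norm_def by simp
  then show "(cmod (c * \<epsilon> + U f q))\<^sup>2 - (cmod (U f q))\<^sup>2 = (cmod (c + f r))\<^sup>2 - (cmod (f r))\<^sup>2"
    unfolding infsum_norm_add_basis_vec[OF fock_space_summable[OF fock_unitary_closed[OF U f]]]
      infsum_norm_add_basis_vec[OF fock_space_summable[OF f]] norm
    by simp
qed

lemma gamma_relations_unique:
  assumes U: "fock_unitary U" "gamma_relations U" and f: "f \<in> fock_space"
  shows "U f = gauge_op f"
proof (rule eq_on_shift_modes)
  fix m n
  show "U f (shift_modes (m, n)) = gauge_op f (shift_modes (m, n))"
  proof (cases "finite m \<and> finite n")
    case True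
    have "U (basis_vec m n) = gauge_op (basis_vec m n)"
      using gamma_relations_agree_on_basis_vec[OF U fock_unitary_gauge_op gamma_relations_gauge_op] True
      by blast
    then have "U (basis_vec (fst (m, n)) (snd (m, n)))
        = (\<lambda>p. gauge_sign (m, n) * basis_vec (fst (shift_modes (m, n))) (snd (shift_modes (m, n))) p)"
      by (simp add: gauge_op_basis_vec shift_modes_pair)
    from fock_unitary_coeff[OF U(1) f _ _ this gauge_sign_cases] True show ?thesis by simp
  next
    case False
    then have "f (m, n) = 0" using fock_space_finite[OF f, of "(m, n)"] by auto
    moreover have "U f (shift_modes (m, n)) = 0"
      using fock_space_finite[OF fock_unitary_closed[OF U(1) f], of "shift_modes (m, n)"] False
      by (auto simp: shift_modes_pair)
    ultimately show ?thesis by simp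
  qed
qed

section \<open>Zero charge, unexcited states and the inverse\<close>

lemma all_shift_modes: "(\<forall>q. P q) \<longleftrightarrow> (\<forall>p. P (shift_modes p))"
  by (metis shift_unshift_modes)

lemma gauge_op_zero_charge_iff:
  assumes f: "f \<in> fock_space"
  shows "gauge_op f \<in> zero_charge \<longleftrightarrow> f \<in> zero_charge"
proof -
  have "(gauge_op f (shift_modes p) \<noteq> 0 \<longrightarrow> card (fst (shift_modes p)) = card (snd (shift_modes p)))
      \<longleftrightarrow> (f p \<noteq> 0 \<longrightarrow> card (fst p) = card (snd p))" for p
  proof -
    obtain m n where p: "p = (m, n)" by force
    have "gauge_op f (shift_modes p) \<noteq> 0 \<longleftrightarrow> f p \<noteq> 0" using gauge_sign_cases[of p] by auto
    moreover have "card (shift_b m n) = card (shift_c m n) \<longleftrightarrow> card m = card n" if "f p \<noteq> 0"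
      using fock_space_finite[OF f that] card_shift_b_eq_shift_c_iff p by simp
    ultimately show ?thesis by (auto simp: p shift_modes_pair)
  qed
  then have "(\<forall>q. gauge_op f q \<noteq> 0 \<longrightarrow> card (fst q) = card (snd q))
      \<longleftrightarrow> (\<forall>p. f p \<noteq> 0 \<longrightarrow> card (fst p) = card (snd p))"
    by (subst all_shift_modes) simp
  then show ?thesis
    using f fock_unitary_closed[OF fock_unitary_gauge_op f] by (simp add: zero_charge_def)
qed

lemma gauge_op_zero_charge: "gauge_op ` zero_charge = zero_charge"
proof
  show "gauge_op ` zero_charge \<subseteq> zero_charge"
    using gauge_op_zero_charge_iff by (auto simp: zero_charge_def)
  show "zero_charge \<subseteq> gauge_op ` zero_charge"
  proof
    fix g assume g: "g \<in> zero_charge"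
    then have "gauge_op_inv g \<in> fock_space"
      by (simp add: zero_charge_def fock_unitary_closed[OF fock_unitary_gauge_op_inv])
    then have "gauge_op_inv g \<in> zero_charge" using g gauge_op_zero_charge_iff by force
    then show "g \<in> gauge_op ` zero_charge" by (metis gauge_op_gauge_op_inv image_eqI)
  qed
qed

lemma bann_bdag: "bann k (bdag k h) = (\<lambda>(m, n). if k \<notin> m then h (m, n) else 0)"
  by (auto simp: fun_eq_iff bann_mode_op bdag_mode_op mode_op_def power_add[symmetric] insert_absorb)

lemma omega_pos_fock_space: "omega_pos k \<in> fock_space"
  by (induction k) (simp_all add: vac_fock_space bdag_fock_space cdag_fock_space)

lemma omega_neg_fock_space: "omega_neg k \<in> fock_space"
  by (induction k) (simp_all add: vac_fock_space bdag_fock_space cdag_fock_space)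

lemma Omega_fock_space: "Omega P \<in> fock_space"
  by (simp add: Omega_def omega_pos_fock_space omega_neg_fock_space)

lemma gauge_op_omega_pos: "gauge_op (omega_pos (Suc k)) = omega_pos k"
proof (induction k)
  case 0
  have "gauge_op (bdag 0 (cdag 0 vac)) = cann 1 (bann (-1) (bdag (-1) (cdag 1 vac)))"
    by (simp add: gauge_op_bdag0 gauge_op_cdag0 gauge_op_vac cdag_fock_space vac_fock_space)
  also have "\<dots> = vac"
    by (auto simp: fun_eq_iff bann_bdag cann_mode_op cdag_mode_op mode_op_def vac_def basis_vec_def)
  finally show ?case by simp
next
  case (Suc k)
  have h: "omega_pos (Suc k) \<in> fock_space" by (rule omega_pos_fock_space)
  have "gauge_op (omega_pos (Suc (Suc k)))
      = bdag (int (Suc k) - 1) (cdag (- int (Suc k) + 1) (gauge_op (omega_pos (Suc k))))"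
    using gauge_op_bdag[OF cdag_fock_space[OF h], of "int (Suc k)"]
      gauge_op_cdag[OF h, of "- int (Suc k)"] by simp
  then show ?case using Suc by simp
qed

lemma gauge_op_omega_neg: "gauge_op (omega_neg k) = omega_neg (Suc k)"
proof (induction k)
  case 0
  then show ?case by (simp add: gauge_op_vac)
next
  case (Suc k)
  have h: "omega_neg k \<in> fock_space" by (rule omega_neg_fock_space)
  have "gauge_op (omega_neg (Suc k))
      = bdag (- int (Suc k) - 1) (cdag (int (Suc k) + 1) (gauge_op (omega_neg k)))"
    using gauge_op_bdag[OF cdag_fock_space[OF h], of "- int (Suc k)"]
      gauge_op_cdag[OF h, of "int (Suc k)"] by simp
  then show ?case using Suc by simp
qed

lemma gauge_op_Omega: "gauge_op (Omega P) = Omega (P - 1)"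
proof (cases "P \<ge> 1")
  case True
  then have "nat P = Suc (nat (P - 1))" by simp
  then show ?thesis using True gauge_op_omega_pos[of "nat (P - 1)"] by (simp add: Omega_def)
next
  case False
  then have "Omega P = omega_neg (nat (- P))" by (cases "P = 0") (simp_all add: Omega_def)
  moreover have "nat (- (P - 1)) = Suc (nat (- P))" using False by simp
  ultimately show ?thesis using False gauge_op_omega_neg[of "nat (- P)"] by (simp add: Omega_def)
qed

lemma inv_into_gauge_op_Omega: "inv_into fock_space gauge_op (Omega P) = Omega (P + 1)"
  by (metis gauge_op_Omega gauge_op_inv_gauge_op inv_into_gauge_op Omega_fock_space add_diff_cancel_right')

lemma inv_into_gauge_op_intertwines:
  assumes "f \<in> fock_space" "X f \<in> fock_space" "gauge_op (Y (gauge_op_inv f)) = X f"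
  shows "inv_into fock_space gauge_op (X f) = Y (inv_into fock_space gauge_op f)"
  using assms by (metis gauge_op_inv_gauge_op inv_into_gauge_op)

lemma gamma_inv_relations_gauge_op: "gamma_inv_relations (inv_into fock_space gauge_op)"
proof -
  let ?H = "inv_into fock_space gauge_op"
  have vac: "?H vac = bdag 0 (cdag 0 vac)"
    using inv_into_gauge_op_Omega[of 0] by (simp add: Omega_def)
  have shifted: "?H (bann n f) = bann (n + 1) (?H f) \<and> ?H (bdag n f) = bdag (n + 1) (?H f)"
    if "f \<in> fock_space" "n \<noteq> -1" for n f
  proof -
    have "gauge_op_inv f \<in> fock_space" "n + 1 \<noteq> 0"
      using that fock_unitary_closed[OF fock_unitary_gauge_op_inv] by auto
    then show ?thesis using that
      by (simp add: inv_into_gauge_op_intertwines bann_fock_space bdag_fock_space gauge_op_bann gauge_op_bdag)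
  qed
  have shifted_c: "?H (cann n f) = cann (n - 1) (?H f) \<and> ?H (cdag n f) = cdag (n - 1) (?H f)"
    if "f \<in> fock_space" "n \<noteq> 1" for n f
  proof -
    have "gauge_op_inv f \<in> fock_space" "n - 1 \<noteq> 0"
      using that fock_unitary_closed[OF fock_unitary_gauge_op_inv] by auto
    then show ?thesis using that
      by (simp add: inv_into_gauge_op_intertwines cann_fock_space cdag_fock_space gauge_op_cann gauge_op_cdag)
  qed
  have conjugated: "?H (cdag 1 f) = bann 0 (?H f) \<and> ?H (bdag (-1) f) = cann 0 (?H f)
      \<and> ?H (cann 1 f) = bdag 0 (?H f) \<and> ?H (bann (-1) f) = cdag 0 (?H f)"
    if "f \<in> fock_space" for f
  proof -
    have "gauge_op_inv f \<in> fock_space"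
      using that fock_unitary_closed[OF fock_unitary_gauge_op_inv] by auto
    then show ?thesis using that
      by (simp add: inv_into_gauge_op_intertwines bann_fock_space bdag_fock_space cann_fock_space
          cdag_fock_space gauge_op_bann0 gauge_op_bdag0 gauge_op_cann0 gauge_op_cdag0)
  qed
  show ?thesis unfolding gamma_inv_relations_def using vac shifted shifted_c conjugated by blast
qed

lemma fock_unitary_inv_into_gauge_op: "fock_unitary (inv_into fock_space gauge_op)"
proof -
  have "fock_unitary gauge_op_inv" by (rule fock_unitary_gauge_op_inv)
  moreover have "\<forall>g\<in>fock_space. inv_into fock_space gauge_op g = gauge_op_inv g"
    by (simp add: inv_into_gauge_op)
  ultimately show ?thesis
    unfolding fock_unitary_def
    by (simp add: fock_space_lincomb image_cong[OF refl, of fock_space "inv_into fock_space gauge_op"])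
qed

theorem lemma2:
  shows "\<exists>G. fock_unitary G \<and> gamma_relations G
     \<and> (\<forall>G'. fock_unitary G' \<and> gamma_relations G' \<longrightarrow> (\<forall>f\<in>fock_space. G' f = G f))
     \<and> G ` zero_charge = zero_charge
     \<and> fock_unitary (inv_into fock_space G)
     \<and> (\<forall>P. G (Omega P) = Omega (P - 1) \<and> inv_into fock_space G (Omega P) = Omega (P + 1))
     \<and> gamma_inv_relations (inv_into fock_space G)"
proof (intro exI conjI allI impI ballI)
  show "fock_unitary gauge_op" by (rule fock_unitary_gauge_op)
  show "gamma_relations gauge_op" by (rule gamma_relations_gauge_op)
  show "G' f = gauge_op f" if "fock_unitary G' \<and> gamma_relations G'" "f \<in> fock_space" for G' f
    using gamma_relations_unique that by blast
  show "gauge_op ` zero_charge = zero_charge" by (rule gauge_op_zero_charge)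
  show "fock_unitary (inv_into fock_space gauge_op)" by (rule fock_unitary_inv_into_gauge_op)
  show "gauge_op (Omega P) = Omega (P - 1)" for P by (rule gauge_op_Omega)
  show "inv_into fock_space gauge_op (Omega P) = Omega (P + 1)" for P by (rule inv_into_gauge_op_Omega)
  show "gamma_inv_relations (inv_into fock_space gauge_op)" by (rule gamma_inv_relations_gauge_op)
qed

end
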